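(* Let $m$ be Lebesgue measure on $\mathbb{T}=[-\pi,\pi]$, let $(\phi_n)$ be the real trigonometric system, and let $\mathcal{F}(f)=\big(\int_{\mathbb{T}}f\phi_n\,dm\big)_n$ be the Fourier operator. Fix $1<r\le2$, $r\le p<\infty$, $1<q\le\infty$, and let $T\colon L^p(m)\to\ell^q$ be a nontrivial continuous linear operator. Write $r'$ for the conjugate exponent of $r$, $s=s_{r'q}$, and $s'$ for the conjugate exponent of $s$. The following are equivalent: (a) There exists $g\in\ell^{s}$ such that $T(f)=g\,\mathcal{F}(f)$ (coordinatewise product) for all $f\in L^p(m)$, where $\mathcal{F}$ is regarded as the operator $L^r(m)\to\ell^{r'}$ and $f\in L^p(m)\subset L^r(m)$. (b) $T(\phi_n)_i=0$ for all $i\ne n$, and $\big(T(\phi_i)_i\big)_i\in\ell^{s}$. (c) There exists $C>0$ such that $$\sum_{i=1}^n\sum_{j=1}^m r_{ij}\,T(\phi_j)_i\le C\Big(\sum_{i=1}^{\min\{n,m\}}|r_{ii}|^{s'}\Big)^{1/s'}$$ for all $n,m\in\mathbb{N}$ and all real $(r_{ij})$ with $|r_{ij}|\le1$. Moreover, if $r'\le q$, then (a)–(c) are equivalent to: (d) There exists $C>0$ such that for all $n,m\in\mathbb{N}$ and all real $(r_j)$ with $|r_j|\le1$: $\sum_{j=1}^m r_jT(\phi_j)_n\le C|r_n|$ if $n\le m$, and $\sum_{j=1}^m r_jT(\phi_j)_n\le 0$ if $n>m$.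
   Context: The real trigonometric system on $[-\pi,\pi]$: $\phi_1=1/\sqrt{2\pi}$, $\phi_{2k}(x)=\cos(kx)/\sqrt{\pi}$, $\phi_{2k+1}(x)=\sin(kx)/\sqrt{\pi}$. By the Hausdorff–Young inequality, $\mathcal{F}\colon L^r(m)\to\ell^{r'}$ is continuous for $1<r\le2$. For exponents $1\le a,b\le\infty$, $s_{ab}=\frac{ab}{a-b}$ if $1\le b<a<\infty$; $s_{ab}=b$ if $1\le b<a=\infty$; $s_{ab}=\infty$ if $1\le a\le b\le\infty$. $T(\phi_j)_i$ denotes the $i$-th coordinate of $T(\phi_j)$. *)

theory Defs
  imports "HOL-Analysis.Analysis"
begin

definition torus :: "real measure" where
  "torus = lebesgue_on {-pi..pi}"

text \<open>Real trigonometric system, indexed from 0 (index i here = index i+1 in the paper):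
  trig 0 = 1/sqrt(2 pi), trig (2k-1) = cos(kx)/sqrt pi, trig (2k) = sin(kx)/sqrt pi (k >= 1).\<close>
definition trig :: "nat \<Rightarrow> real \<Rightarrow> real" where
  "trig n x = (if n = 0 then 1 / sqrt (2 * pi)
              else if odd n then cos (real ((n + 1) div 2) * x) / sqrt pi
              else sin (real (n div 2) * x) / sqrt pi)"

definition fourier :: "(real \<Rightarrow> real) \<Rightarrow> nat \<Rightarrow> real" where
  "fourier f n = integral\<^sup>L torus (\<lambda>x. f x * trig n x)"

definition Lp :: "real \<Rightarrow> (real \<Rightarrow> real) set" where
  "Lp p = {f. f \<in> borel_measurable torus \<and> integrable torus (\<lambda>x. \<bar>f x\<bar> powr p)}"

definition Lp_norm :: "real \<Rightarrow> (real \<Rightarrow> real) \<Rightarrow> real" where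
  "Lp_norm p f = (integral\<^sup>L torus (\<lambda>x. \<bar>f x\<bar> powr p)) powr (1 / p)"

definition lspace :: "ereal \<Rightarrow> (nat \<Rightarrow> real) set" where
  "lspace q = (if q = \<infinity> then {x. \<exists>B. \<forall>n. \<bar>x n\<bar> \<le> B}
               else {x. summable (\<lambda>n. \<bar>x n\<bar> powr real_of_ereal q)})"

definition lnorm :: "ereal \<Rightarrow> (nat \<Rightarrow> real) \<Rightarrow> real" where
  "lnorm q x = (if q = \<infinity> then (SUP n. \<bar>x n\<bar>)
               else (\<Sum>n. \<bar>x n\<bar> powr real_of_ereal q) powr (1 / real_of_ereal q))"

definition conj_exp :: "ereal \<Rightarrow> ereal" where
  "conj_exp a = (if a = \<infinity> then 1 else if a = 1 then \<infinity>
                 else ereal (real_of_ereal a / (real_of_ereal a - 1)))"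

definition s_exp :: "ereal \<Rightarrow> ereal \<Rightarrow> ereal" where
  "s_exp a b = (if 1 \<le> b \<and> b < a \<and> a < \<infinity> then
                   ereal (real_of_ereal a * real_of_ereal b / (real_of_ereal a - real_of_ereal b))
                else if 1 \<le> b \<and> b < a \<and> a = \<infinity> then b
                else \<infinity>)"

end

(*
  Every condition only involves the coordinates of T f, and each coordinate is a bounded
  linear functional on L^p.  If T is diagonal on the trigonometric system with diagonal g, then
  T f and g * fourier f agree on trigonometric polynomials by linearity; trigonometric polynomials
  are dense in L^p (truncate, approximate by continuous functions vanishing near the endpoints,
  then apply Weierstrass on the circle), and both sides are small on functions of small L^p norm,
  so they agree everywhere.  The other equivalences are finite-dimensional: g lies in l^s iff
  x |-> sum x_i g_i is bounded in the l^(s') norm over finite sequences with |x_i| <= 1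
  (Hoelder/Young), and test matrices supported on one entry, one row or the diagonal turn this
  into the matrix conditions; if r' <= q then s = infinity and s' = 1.
*)

theory Submission
  imports Defs
begin

section \<open>Orthonormality of the trigonometric system\<close>

lemma has_integral_cos_int_mult:
  "((\<lambda>t. cos (real_of_int k * t)) has_integral (if k = 0 then 2 * pi else 0)) {-pi..pi}"
proof (cases "k = 0")
  case True
  then show ?thesis using has_integral_const_real[of "1::real" "-pi" pi] by simp
next
  case False
  have "((\<lambda>t. cos (real_of_int k * t)) has_integral
          sin (real_of_int k * pi) / k - sin (real_of_int k * (-pi)) / k) {-pi..pi}"
    by (rule fundamental_theorem_of_calculus)
       (use False in \<open>auto intro!: derivative_eq_intros
          simp: has_real_derivative_iff_has_vector_derivative[symmetric]\<close>)
  moreover have "sin (real_of_int k * pi) = 0"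
    by (simp add: sin_times_pi_eq_0)
  ultimately show ?thesis using False by simp
qed

lemma has_integral_sin_int_mult:
  "((\<lambda>t. sin (real_of_int k * t)) has_integral 0) {-pi..pi}"
proof (cases "k = 0")
  case False
  have "((\<lambda>t. sin (real_of_int k * t)) has_integral
          - cos (real_of_int k * pi) / k - (- cos (real_of_int k * (-pi)) / k)) {-pi..pi}"
    by (rule fundamental_theorem_of_calculus)
       (use False in \<open>auto intro!: derivative_eq_intros
          simp: has_real_derivative_iff_has_vector_derivative[symmetric]\<close>)
  then show ?thesis by simp
qed simp

lemma has_integral_cos_mult_cos:
  "((\<lambda>t. cos (real_of_int a * t) * cos (real_of_int b * t)) has_integral
     ((if a - b = 0 then 2 * pi else 0) + (if a + b = 0 then 2 * pi else 0)) / 2) {-pi..pi}"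
proof -
  have "cos (real_of_int a * t) * cos (real_of_int b * t) =
          (cos (real_of_int (a - b) * t) + cos (real_of_int (a + b) * t)) / 2" for t
    by (simp add: cos_times_cos algebra_simps)
  then show ?thesis
    by (simp only:) (intro has_integral_divide has_integral_add has_integral_cos_int_mult)
qed

lemma has_integral_sin_mult_sin:
  "((\<lambda>t. sin (real_of_int a * t) * sin (real_of_int b * t)) has_integral
     ((if a - b = 0 then 2 * pi else 0) - (if a + b = 0 then 2 * pi else 0)) / 2) {-pi..pi}"
proof -
  have "sin (real_of_int a * t) * sin (real_of_int b * t) =
          (cos (real_of_int (a - b) * t) - cos (real_of_int (a + b) * t)) / 2" for t
    by (simp add: sin_times_sin algebra_simps)
  then show ?thesis
    by (simp only:) (intro has_integral_divide has_integral_diff has_integral_cos_int_mult)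
qed

lemma has_integral_sin_mult_cos:
  "((\<lambda>t. sin (real_of_int a * t) * cos (real_of_int b * t)) has_integral 0) {-pi..pi}"
proof -
  have "sin (real_of_int a * t) * cos (real_of_int b * t) =
          (sin (real_of_int (a + b) * t) + sin (real_of_int (a - b) * t)) / 2" for t
    by (simp add: sin_add sin_diff algebra_simps)
  then show ?thesis
    using has_integral_divide[OF has_integral_add[OF has_integral_sin_int_mult has_integral_sin_int_mult],
        of "a + b" "a - b" 2]
    by (simp only:) simp
qed

definition trig_freq :: "nat \<Rightarrow> nat" where
  "trig_freq n = (n + 1) div 2"

definition trig_harmonic :: "nat \<Rightarrow> real \<Rightarrow> real" where
  "trig_harmonic n x =
     (if even n \<and> n > 0 then sin (real (trig_freq n) * x) else cos (real (trig_freq n) * x))"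

definition trig_weight :: "nat \<Rightarrow> real" where
  "trig_weight n = (if n = 0 then 1 / sqrt (2 * pi) else 1 / sqrt pi)"

lemma trig_eq_weight_harmonic: "trig n x = trig_weight n * trig_harmonic n x"
  unfolding trig_def trig_weight_def trig_harmonic_def trig_freq_def
  by (auto elim!: oddE evenE)

lemma has_integral_trig_harmonic_mult:
  "((\<lambda>t. trig_harmonic n t * trig_harmonic i t) has_integral
      (if n = i then (if n = 0 then 2 * pi else pi) else 0)) {-pi..pi}"
proof -
  have freq_neq: "trig_freq n \<noteq> trig_freq i"
    if "n \<noteq> i" "(even n \<and> n > 0) = (even i \<and> i > 0)"
    using that unfolding trig_freq_def by presburger
  have freq_0: "trig_freq k = 0 \<longleftrightarrow> k = 0" for k
    unfolding trig_freq_def by auto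
  consider "even n \<and> n > 0" "even i \<and> i > 0" | "\<not> (even n \<and> n > 0)" "\<not> (even i \<and> i > 0)"
    | "even n \<and> n > 0" "\<not> (even i \<and> i > 0)" | "\<not> (even n \<and> n > 0)" "even i \<and> i > 0"
    by blast
  then show ?thesis
  proof cases
    case 1
    then show ?thesis
      using has_integral_sin_mult_sin[of "int (trig_freq n)" "int (trig_freq i)"] freq_neq freq_0[of n] freq_0[of i]
      by (cases "n = i") (auto simp: trig_harmonic_def)
  next
    case 2
    then show ?thesis
      using has_integral_cos_mult_cos[of "int (trig_freq n)" "int (trig_freq i)"] freq_neq freq_0[of n] freq_0[of i]
      by (cases "n = i") (auto simp: trig_harmonic_def)
  next
    case 3
    then show ?thesis
      using has_integral_sin_mult_cos[of "int (trig_freq n)" "int (trig_freq i)"]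
      by (auto simp: trig_harmonic_def)
  next
    case 4
    then show ?thesis
      using has_integral_sin_mult_cos[of "int (trig_freq i)" "int (trig_freq n)"]
      by (auto simp: trig_harmonic_def mult.commute)
  qed
qed

lemma continuous_on_trig: "continuous_on S (trig n)"
  by (cases "n = 0"; cases "odd n") (auto simp: trig_def intro!: continuous_intros)

lemma abs_trig_le_1: "\<bar>trig n x\<bar> \<le> 1"
proof -
  have "1 \<le> sqrt pi" "1 \<le> sqrt (2 * pi)"
    using pi_gt3 by simp_all
  moreover have "\<bar>cos y\<bar> \<le> sqrt pi" "\<bar>sin y\<bar> \<le> sqrt pi" for y
    using \<open>1 \<le> sqrt pi\<close> abs_cos_le_one[of y] abs_sin_le_one[of y] by linarith+
  ultimately show ?thesis
    unfolding trig_def by (auto simp: abs_divide divide_le_eq)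
qed

theorem fourier_trig: "fourier (trig n) i = (if n = i then 1 else 0)"
proof -
  have "continuous_on {-pi..pi} (\<lambda>x. trig n x * trig i x)"
    by (intro continuous_intros continuous_on_trig)
  then have "fourier (trig n) i = integral {-pi..pi} (\<lambda>x. trig n x * trig i x)"
    unfolding fourier_def torus_def
    by (intro lebesgue_integral_eq_integral continuous_imp_integrable_real) auto
  also have "\<dots> = trig_weight n * trig_weight i * (if n = i then (if n = 0 then 2 * pi else pi) else 0)"
    using has_integral_mult_right[OF has_integral_trig_harmonic_mult, of "trig_weight n * trig_weight i" n i]
    by (intro integral_unique) (simp add: trig_eq_weight_harmonic mult_ac)
  also have "\<dots> = (if n = i then 1 else 0)"
    by (auto simp: trig_weight_def power_divide)
  finally show ?thesis .
qed


section \<open>Trigonometric polynomials\<close>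

inductive_set trig_poly :: "(real \<Rightarrow> real) set" where
  trig_poly_trig: "trig k \<in> trig_poly"
| trig_poly_add: "f \<in> trig_poly \<Longrightarrow> g \<in> trig_poly \<Longrightarrow> (\<lambda>x. f x + g x) \<in> trig_poly"
| trig_poly_scale: "f \<in> trig_poly \<Longrightarrow> (\<lambda>x. c * f x) \<in> trig_poly"

lemma trig_poly_diff: "f \<in> trig_poly \<Longrightarrow> g \<in> trig_poly \<Longrightarrow> (\<lambda>x. f x - g x) \<in> trig_poly"
  using trig_poly_add[OF _ trig_poly_scale[of g "-1"], of f] by simp

lemma trig_poly_divide: "f \<in> trig_poly \<Longrightarrow> (\<lambda>x. f x / c) \<in> trig_poly"
  using trig_poly_scale[of f "1 / c"] by simp

lemma trig_poly_const: "(\<lambda>x. c) \<in> trig_poly"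
proof -
  have "(\<lambda>x. (c * sqrt (2 * pi)) * trig 0 x) \<in> trig_poly"
    by (intro trig_poly_scale trig_poly_trig)
  then show ?thesis by (simp add: trig_def)
qed

lemma trig_poly_cos_nat_mult: "(\<lambda>t. cos (real k * t)) \<in> trig_poly"
proof (cases "k = 0")
  case True
  then show ?thesis using trig_poly_const[of 1] by simp
next
  case False
  have "(\<lambda>x. sqrt pi * trig (2 * k - 1) x) \<in> trig_poly"
    by (intro trig_poly_scale trig_poly_trig)
  moreover have "2 * k - 1 \<noteq> 0" "odd (2 * k - 1)" "(2 * k - 1 + 1) div 2 = k"
    using False by presburger+
  ultimately show ?thesis by (simp add: trig_def)
qed

lemma trig_poly_sin_nat_mult: "(\<lambda>t. sin (real k * t)) \<in> trig_poly"
proof (cases "k = 0")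
  case True
  then show ?thesis using trig_poly_const[of 0] by simp
next
  case False
  have "(\<lambda>x. sqrt pi * trig (2 * k) x) \<in> trig_poly"
    by (intro trig_poly_scale trig_poly_trig)
  then show ?thesis using False by (simp add: trig_def)
qed

lemma trig_poly_cos_int_mult: "(\<lambda>t. cos (real_of_int z * t)) \<in> trig_poly"
  by (cases z rule: int_cases2) (use trig_poly_cos_nat_mult in simp_all)

lemma trig_poly_sin_int_mult: "(\<lambda>t. sin (real_of_int z * t)) \<in> trig_poly"
proof (cases z rule: int_cases2)
  case (nonpos k)
  have "(\<lambda>t. (-1) * sin (real k * t)) \<in> trig_poly"
    by (intro trig_poly_scale trig_poly_sin_nat_mult)
  then show ?thesis by (simp add: nonpos)
qed (use trig_poly_sin_nat_mult in simp)

lemma trig_poly_mult_harmonic: "(\<lambda>x. trig_harmonic n x * trig_harmonic m x) \<in> trig_poly"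
proof -
  have cos_cos: "(\<lambda>t. cos (real a * t) * cos (real b * t)) \<in> trig_poly" for a b
  proof -
    have "(\<lambda>t. (cos (real_of_int (int a - int b) * t) + cos (real_of_int (int a + int b) * t)) / 2)
            \<in> trig_poly"
      by (intro trig_poly_divide trig_poly_add trig_poly_cos_int_mult)
    then show ?thesis by (simp add: cos_times_cos algebra_simps)
  qed
  have sin_sin: "(\<lambda>t. sin (real a * t) * sin (real b * t)) \<in> trig_poly" for a b
  proof -
    have "(\<lambda>t. (cos (real_of_int (int a - int b) * t) - cos (real_of_int (int a + int b) * t)) / 2)
            \<in> trig_poly"
      by (intro trig_poly_divide trig_poly_diff trig_poly_cos_int_mult)
    then show ?thesis by (simp add: sin_times_sin algebra_simps)
  qed
  have sin_cos: "(\<lambda>t. sin (real a * t) * cos (real b * t)) \<in> trig_poly" for a b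
  proof -
    have "(\<lambda>t. (sin (real_of_int (int a + int b) * t) + sin (real_of_int (int a - int b) * t)) / 2)
            \<in> trig_poly"
      by (intro trig_poly_divide trig_poly_add trig_poly_sin_int_mult)
    then show ?thesis by (simp add: sin_add sin_diff algebra_simps)
  qed
  have cos_sin: "(\<lambda>t. cos (real a * t) * sin (real b * t)) \<in> trig_poly" for a b
    using sin_cos[of b a] by (simp add: mult.commute)
  show ?thesis
    by (cases "even n \<and> n > 0"; cases "even m \<and> m > 0")
       (simp_all only: trig_harmonic_def simp_thms if_True if_False cos_cos sin_sin sin_cos cos_sin)
qed

lemma trig_poly_mult_trig: "(\<lambda>x. trig n x * trig m x) \<in> trig_poly"
proof -
  have "(\<lambda>x. (trig_weight n * trig_weight m) * (trig_harmonic n x * trig_harmonic m x)) \<in> trig_poly"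
    by (intro trig_poly_scale trig_poly_mult_harmonic)
  then show ?thesis by (simp add: trig_eq_weight_harmonic mult_ac)
qed

lemma trig_poly_mult: "f \<in> trig_poly \<Longrightarrow> g \<in> trig_poly \<Longrightarrow> (\<lambda>x. f x * g x) \<in> trig_poly"
proof (induction f rule: trig_poly.induct)
  case (trig_poly_trig k)
  from trig_poly_trig(1) show ?case
  proof (induction g rule: trig_poly.induct)
    case (trig_poly_trig j)
    show ?case by (rule trig_poly_mult_trig)
  next
    case (trig_poly_add f g)
    then show ?case using trig_poly.trig_poly_add[OF trig_poly_add(3,4)] by (simp add: distrib_left)
  next
    case (trig_poly_scale f c)
    then show ?case using trig_poly.trig_poly_scale[OF trig_poly_scale(2), of c] by (simp add: mult_ac)
  qed
next
  case (trig_poly_add f1 f2)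
  then show ?case using trig_poly.trig_poly_add[OF trig_poly_add(3,4)] by (simp add: distrib_right)
next
  case (trig_poly_scale f c)
  then show ?case using trig_poly.trig_poly_scale[OF trig_poly_scale(2), of c] by (simp add: mult_ac)
qed

lemma trig_poly_polynomial_of_cis:
  "real_polynomial_function g \<Longrightarrow> (\<lambda>t. g (cis t)) \<in> trig_poly"
proof (induction g rule: real_polynomial_function.induct)
  case (linear f)
  have "f (cis t) = cos t * f 1 + sin t * f \<i>" for t
  proof -
    have "cis t = cos t *\<^sub>R 1 + sin t *\<^sub>R \<i>"
      by (simp add: cis.ctr complex_eq_iff)
    then show ?thesis
      using bounded_linear.linear[OF linear] by (simp add: linear_add linear_scale)
  qed
  moreover have "(\<lambda>t. f 1 * cos (real 1 * t) + f \<i> * sin (real 1 * t)) \<in> trig_poly"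
    by (intro trig_poly_add trig_poly_scale trig_poly_cos_nat_mult trig_poly_sin_nat_mult)
  ultimately show ?case by (simp add: mult_ac)
next
  case (const c)
  show ?case by (rule trig_poly_const)
next
  case (add f g)
  show ?case by (rule trig_poly_add[OF add.IH])
next
  case (mult f g)
  show ?case by (rule trig_poly_mult[OF mult.IH])
qed

lemma continuous_on_trig_poly: "f \<in> trig_poly \<Longrightarrow> continuous_on S f"
  by (induction f rule: trig_poly.induct) (auto intro!: continuous_intros continuous_on_trig)

lemma abs_Arg_ge_if_Re_near_minus_one:
  assumes "w \<noteq> 0" "Re w / norm w < - cos \<delta>" "0 < \<delta>" "\<delta> < pi / 2"
  shows "pi - \<delta> \<le> \<bar>Arg w\<bar>"
proof (rule ccontr)
  assume "\<not> ?thesis"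
  then have "cos (pi - \<delta>) < cos \<bar>Arg w\<bar>"
    using assms(3,4) by (subst cos_mono_less_eq) auto
  moreover have "cos \<bar>Arg w\<bar> = Re w / norm w"
    using cos_Arg[OF assms(1)] by (simp add: abs_real_def)
  ultimately show False using assms(2) by simp
qed

text \<open>A function of \<open>t\<close> that vanishes near \<open>\<plusminus>pi\<close> is a function of \<open>cis t\<close>
  continuous on the circle, so Stone--Weierstrass applies to it.\<close>

lemma continuous_on_sphere_comp_Arg:
  assumes h_cont: "continuous_on UNIV h" and \<delta>: "0 < \<delta>" "\<delta> < pi / 2"
    and h_0: "\<And>t. pi - \<delta> \<le> \<bar>t\<bar> \<Longrightarrow> h t = 0"
  shows "continuous_on (sphere 0 1) (\<lambda>z. h (Arg z))"
proof (intro continuous_at_imp_continuous_on ballI)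
  fix z :: complex
  assume "z \<in> sphere 0 1"
  show "isCont (\<lambda>z. h (Arg z)) z"
  proof (cases "z \<in> \<real>\<^sub>\<le>\<^sub>0")
    case False
    then show ?thesis
      using continuous_at_Arg h_cont
      by (intro continuous_at_compose[of z Arg h, unfolded o_def])
         (auto simp: continuous_on_eq_continuous_at)
  next
    case True
    with \<open>z \<in> sphere 0 1\<close> have z: "z = -1"
      by (auto simp: nonpos_Reals_def dist_norm)
    have "((\<lambda>w. Re w / norm w) \<longlongrightarrow> Re (-1) / norm (-1::complex)) (nhds (-1))"
      by (intro tendsto_intros filterlim_ident) auto
    moreover have "cos \<delta> < 1"
      using \<delta> cos_monotone_0_pi[of 0 \<delta>] by auto
    ultimately have "eventually (\<lambda>w. Re w / norm w < - cos \<delta>) (nhds (-1::complex))"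
      using order_tendstoD(2) by force
    moreover have "eventually (\<lambda>w. w \<noteq> 0) (nhds (-1::complex))"
      by (rule t1_space_nhds) simp
    ultimately have "eventually (\<lambda>w. h (Arg w) = 0) (nhds (-1::complex))"
      by eventually_elim (use abs_Arg_ge_if_Re_near_minus_one \<delta> h_0 in auto)
    then have "eventually (\<lambda>w. 0 = h (Arg w)) (at (-1::complex))"
      by (auto simp: eventually_at_filter elim: eventually_mono)
    moreover have "h (Arg (-1)) = 0"
      using h_0[of pi] \<delta> Arg_of_real[of "-1"] by simp
    ultimately show ?thesis
      unfolding z isCont_def by (simp add: Lim_transform_eventually[OF tendsto_const])
  qed
qed

lemma trig_poly_uniform_approx:
  assumes h_cont: "continuous_on UNIV h" and \<delta>: "0 < \<delta>" "\<delta> < pi / 2"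
    and h_0: "\<And>t. pi - \<delta> \<le> \<bar>t\<bar> \<Longrightarrow> h t = 0" and \<eta>: "0 < \<eta>"
  shows "\<exists>P \<in> trig_poly. \<forall>t \<in> {-pi..pi}. \<bar>h t - P t\<bar> < \<eta>"
proof -
  obtain g where g: "polynomial_function g" "\<forall>z \<in> sphere 0 1. norm (h (Arg z) - g z) < \<eta>"
    using Stone_Weierstrass_polynomial_function[OF compact_sphere
        continuous_on_sphere_comp_Arg[OF h_cont \<delta> h_0] \<eta>]
    by blast
  show ?thesis
  proof (intro bexI ballI)
    show "(\<lambda>t. g (cis t)) \<in> trig_poly"
      using g(1) by (intro trig_poly_polynomial_of_cis) (simp add: real_polynomial_function_eq)
    fix t assume t: "t \<in> {-pi..pi}"
    have "h (Arg (cis t)) = h t"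
    proof (cases "t = -pi")
      case True
      have "cis (-pi) = -1" by (simp add: complex_eq_iff)
      then show ?thesis
        using h_0[of pi] h_0[of "-pi"] \<delta> True Arg_of_real[of "-1"] by simp
    next
      case False
      then show ?thesis using t by (subst Arg_cis) auto
    qed
    then show "\<bar>h t - g (cis t)\<bar> < \<eta>"
      using g(2)[rule_format, of "cis t"] by simp
  qed
qed

section \<open>Density of trigonometric polynomials in \<open>L\<^sup>p\<close>\<close>

lemma space_torus [simp]: "space torus = {-pi..pi}"
  by (simp add: torus_def)

lemma integrable_torus_const [simp]: "integrable torus (\<lambda>x. c)"
  unfolding torus_def by simp

lemma integral_torus_const: "(\<integral>x. c \<partial>torus) = 2 * pi * c"
proof -
  have "(\<integral>x. c \<partial>torus) = integral {-pi..pi} (\<lambda>x. c)"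
    unfolding torus_def by (rule lebesgue_integral_eq_integral) auto
  then show ?thesis by simp
qed

lemma measure_torus [simp]: "measure torus {-pi..pi} = 2 * pi"
  using integral_torus_const[of 1] by simp

lemma borel_measurable_torus_continuous: "continuous_on UNIV g \<Longrightarrow> g \<in> borel_measurable torus"
  unfolding torus_def
  by (rule continuous_imp_measurable_on_sets_lebesgue) (auto intro: continuous_on_subset)

lemma AE_torus_not_in_negligible:
  assumes "negligible N"
  shows "AE x in torus. x \<notin> N"
proof -
  have "AE x in lebesgue. x \<notin> N"
    using assms by (intro AE_not_in) (simp add: negligible_iff_null_sets)
  then show ?thesis
    unfolding torus_def by (subst AE_restrict_space_iff) (auto elim: eventually_mono)
qed

lemma Lp_if_bounded:
  assumes f: "f \<in> borel_measurable torus" and B: "\<And>x. x \<in> {-pi..pi} \<Longrightarrow> \<bar>f x\<bar> \<le> B"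
    and p: "0 \<le> p"
  shows "f \<in> Lp p"
proof -
  have "integrable torus (\<lambda>x. \<bar>f x\<bar> powr p)"
  proof (rule Bochner_Integration.integrable_bound[OF integrable_torus_const[of "B powr p"]])
    show "(\<lambda>x. \<bar>f x\<bar> powr p) \<in> borel_measurable torus"
      using f by measurable
    show "AE x in torus. norm (\<bar>f x\<bar> powr p) \<le> norm (B powr p)"
      using B p by (intro AE_I2) (auto intro: powr_mono2 order_trans[OF _ abs_ge_self])
  qed
  then show ?thesis using f by (simp add: Lp_def)
qed

lemma Lp_if_continuous:
  assumes f: "continuous_on UNIV f" and p: "0 \<le> p"
  shows "f \<in> Lp p"
proof -
  have "compact (f ` {-pi..pi})"
    by (rule compact_continuous_image[OF continuous_on_subset[OF f]]) auto
  then have "bounded (f ` {-pi..pi})"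
    by (rule compact_imp_bounded)
  then obtain B where "\<forall>y \<in> f ` {-pi..pi}. \<bar>y\<bar> \<le> B"
    unfolding bounded_real by blast
  then show ?thesis
    using borel_measurable_torus_continuous[OF f] p by (intro Lp_if_bounded) auto
qed

lemma Lp_trig_poly: "f \<in> trig_poly \<Longrightarrow> 0 \<le> p \<Longrightarrow> f \<in> Lp p"
  by (intro Lp_if_continuous continuous_on_trig_poly)

lemma powr_abs_add_le:
  fixes a b p :: real
  assumes "0 \<le> p"
  shows "\<bar>a + b\<bar> powr p \<le> 2 powr p * (\<bar>a\<bar> powr p + \<bar>b\<bar> powr p)"
proof -
  have "\<bar>a + b\<bar> powr p \<le> (2 * max \<bar>a\<bar> \<bar>b\<bar>) powr p"
    using assms by (intro powr_mono2) auto
  also have "\<dots> = 2 powr p * max \<bar>a\<bar> \<bar>b\<bar> powr p"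
    by (simp add: powr_mult)
  also have "\<dots> \<le> 2 powr p * (\<bar>a\<bar> powr p + \<bar>b\<bar> powr p)"
    by (intro mult_left_mono) (auto simp: max_def)
  finally show ?thesis .
qed

lemma Lp_diff:
  assumes f: "f \<in> Lp p" and g: "g \<in> Lp p" and p: "0 \<le> p"
  shows "(\<lambda>x. f x - g x) \<in> Lp p"
proof -
  have fm: "f \<in> borel_measurable torus" and gm: "g \<in> borel_measurable torus"
    using f g by (auto simp: Lp_def)
  have "integrable torus (\<lambda>x. 2 powr p * (\<bar>f x\<bar> powr p + \<bar>g x\<bar> powr p))"
    using f g by (intro integrable_mult_right Bochner_Integration.integrable_add) (auto simp: Lp_def)
  moreover have "(\<lambda>x. \<bar>f x - g x\<bar> powr p) \<in> borel_measurable torus"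
    using fm gm by measurable
  ultimately have "integrable torus (\<lambda>x. \<bar>f x - g x\<bar> powr p)"
  proof (rule Bochner_Integration.integrable_bound, intro AE_I2)
    fix x
    show "norm (\<bar>f x - g x\<bar> powr p) \<le> norm (2 powr p * (\<bar>f x\<bar> powr p + \<bar>g x\<bar> powr p))"
      using powr_abs_add_le[OF p, of "f x" "- g x"] by simp
  qed
  then show ?thesis using fm gm by (simp add: Lp_def)
qed

lemma integral_powr_abs_diff_triangle:
  assumes f: "f \<in> Lp p" and g: "g \<in> Lp p" and h: "h \<in> Lp p" and p: "0 \<le> p"
  shows "(\<integral>x. \<bar>f x - h x\<bar> powr p \<partial>torus)
           \<le> 2 powr p * ((\<integral>x. \<bar>f x - g x\<bar> powr p \<partial>torus) + (\<integral>x. \<bar>g x - h x\<bar> powr p \<partial>torus))"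
proof -
  have int: "integrable torus (\<lambda>x. \<bar>u x - v x\<bar> powr p)" if "u \<in> Lp p" "v \<in> Lp p" for u v
    using Lp_diff[OF that p] by (simp add: Lp_def)
  have "\<bar>f x - h x\<bar> powr p \<le> 2 powr p * (\<bar>f x - g x\<bar> powr p + \<bar>g x - h x\<bar> powr p)" for x
    using powr_abs_add_le[OF p, of "f x - g x" "g x - h x"] by simp
  then have "(\<integral>x. \<bar>f x - h x\<bar> powr p \<partial>torus)
          \<le> (\<integral>x. 2 powr p * (\<bar>f x - g x\<bar> powr p + \<bar>g x - h x\<bar> powr p) \<partial>torus)"
    using int f g h
    by (intro integral_mono integrable_mult_right Bochner_Integration.integrable_add) auto
  also have "\<dots> = 2 powr p * ((\<integral>x. \<bar>f x - g x\<bar> powr p \<partial>torus) + (\<integral>x. \<bar>g x - h x\<bar> powr p \<partial>torus))"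
    using int f g h by simp
  finally show ?thesis .
qed


lemma tendsto_integral_powr_abs_diff:
  fixes s :: "nat \<Rightarrow> real \<Rightarrow> real"
  assumes s: "\<And>n. s n \<in> borel_measurable torus" and f: "f \<in> borel_measurable torus"
    and lim: "AE x in torus. (\<lambda>n. s n x) \<longlonglongrightarrow> f x"
    and bound: "\<And>n x. \<bar>s n x - f x\<bar> \<le> w x"
    and w: "integrable torus (\<lambda>x. w x powr p)" and p: "0 < p"
  shows "(\<lambda>n. \<integral>x. \<bar>s n x - f x\<bar> powr p \<partial>torus) \<longlonglongrightarrow> 0"
proof -
  have "(\<lambda>n. \<integral>x. \<bar>s n x - f x\<bar> powr p \<partial>torus) \<longlonglongrightarrow> (\<integral>x. 0 \<partial>torus)"
  proof (rule integral_dominated_convergence[OF _ _ w])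
    show "(\<lambda>x. \<bar>s n x - f x\<bar> powr p) \<in> borel_measurable torus" for n
      using s f by measurable
    show "AE x in torus. (\<lambda>n. \<bar>s n x - f x\<bar> powr p) \<longlonglongrightarrow> 0"
      using lim
    proof eventually_elim
      case (elim x)
      then have "(\<lambda>n. \<bar>s n x - f x\<bar>) \<longlonglongrightarrow> 0"
        by (intro tendsto_rabs_zero) (simp add: LIM_zero)
      then show ?case
        using p by (intro tendsto_zero_powrI) auto
    qed
    show "AE x in torus. norm (\<bar>s n x - f x\<bar> powr p) \<le> w x powr p" for n
      using p bound by (intro AE_I2) (auto intro!: powr_mono2)
  qed simp
  then show ?thesis by simp
qed

lemma eventually_less_of_tendsto_0: "X \<longlonglongrightarrow> (0::real) \<Longrightarrow> 0 < e \<Longrightarrow> \<exists>n. X n < e"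
  by (metis eventually_sequentially order.refl order_tendstoD(2))

definition clip :: "real \<Rightarrow> real \<Rightarrow> real" where
  "clip M y = max (- M) (min M y)"

lemma abs_clip_le: "0 \<le> M \<Longrightarrow> \<bar>clip M y\<bar> \<le> M"
  by (auto simp: clip_def)

lemma clip_id: "\<bar>y\<bar> \<le> M \<Longrightarrow> clip M y = y"
  by (auto simp: clip_def)

lemma Lp_approx_by_bounded:
  assumes f: "f \<in> Lp p" and p: "0 < p" and e: "0 < e"
  shows "\<exists>M \<ge> 0. (\<lambda>x. clip M (f x)) \<in> Lp p \<and> (\<integral>x. \<bar>f x - clip M (f x)\<bar> powr p \<partial>torus) < e"
proof -
  have fm: "f \<in> borel_measurable torus" and fi: "integrable torus (\<lambda>x. \<bar>f x\<bar> powr p)"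
    using f by (auto simp: Lp_def)
  have clip_m: "(\<lambda>x. clip M (f x)) \<in> borel_measurable torus" for M
    unfolding clip_def using fm by measurable
  have "(\<lambda>n. \<integral>x. \<bar>clip (real n) (f x) - f x\<bar> powr p \<partial>torus) \<longlonglongrightarrow> 0"
  proof (rule tendsto_integral_powr_abs_diff[OF clip_m fm _ _ _ p])
    show "AE x in torus. (\<lambda>n. clip (real n) (f x)) \<longlonglongrightarrow> f x"
    proof (intro AE_I2 tendsto_eventually)
      fix x
      show "\<forall>\<^sub>F n in sequentially. clip (real n) (f x) = f x"
        unfolding eventually_sequentially
        by (rule exI[of _ "nat \<lceil>\<bar>f x\<bar>\<rceil>"]) (auto intro!: clip_id simp: nat_le_iff ceiling_le_iff)
    qed
    show "\<bar>clip (real n) (f x) - f x\<bar> \<le> \<bar>f x\<bar>" for n x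
      by (auto simp: clip_def)
  qed (use fi in simp)
  then obtain n where "(\<integral>x. \<bar>clip (real n) (f x) - f x\<bar> powr p \<partial>torus) < e"
    using eventually_less_of_tendsto_0 e by blast
  moreover have "(\<lambda>x. clip (real n) (f x)) \<in> Lp p"
    using clip_m p abs_clip_le by (intro Lp_if_bounded[where B = "real n"]) auto
  ultimately show ?thesis
    by (intro exI[of _ "real n"]) (simp add: abs_minus_commute)
qed

definition edge_cutoff :: "nat \<Rightarrow> real \<Rightarrow> real" where
  "edge_cutoff n t = max 0 (min 1 ((real n + 1) * (pi - \<bar>t\<bar>) - 1))"

lemma continuous_on_edge_cutoff: "continuous_on S (edge_cutoff n)"
  unfolding edge_cutoff_def by (intro continuous_intros)

lemma edge_cutoff_bounds: "0 \<le> edge_cutoff n t" "edge_cutoff n t \<le> 1"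
  by (simp_all add: edge_cutoff_def)

lemma edge_cutoff_eq_0:
  assumes "pi - 1 / (2 * (real n + 1)) \<le> \<bar>t\<bar>"
  shows "edge_cutoff n t = 0"
proof -
  have "(real n + 1) * (pi - \<bar>t\<bar>) \<le> (real n + 1) * (1 / (2 * (real n + 1)))"
    using assms by (intro mult_left_mono) auto
  also have "\<dots> = 1 / 2"
    by simp
  finally show ?thesis
    by (simp add: edge_cutoff_def)
qed

lemma tendsto_edge_cutoff:
  assumes "\<bar>t\<bar> < pi"
  shows "(\<lambda>n. edge_cutoff n t) \<longlonglongrightarrow> 1"
proof (rule tendsto_eventually)
  obtain K :: nat where K: "2 / (pi - \<bar>t\<bar>) < real K"
    using reals_Archimedean2 by blast
  have "2 < (real n + 1) * (pi - \<bar>t\<bar>)" if "K \<le> n" for n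
  proof -
    have "2 / (pi - \<bar>t\<bar>) < real n + 1"
      using K that by linarith
    then show ?thesis
      using assms by (simp add: field_simps)
  qed
  then show "\<forall>\<^sub>F n in sequentially. edge_cutoff n t = 1"
    unfolding eventually_sequentially edge_cutoff_def by (intro exI[of _ K]) force
qed

text \<open>Approximate \<open>u\<close> by continuous functions (it is measurable on \<open>[-pi, pi]\<close>), clip them to
  keep the bound \<open>M\<close>, and multiply by a cutoff that vanishes near \<open>\<plusminus>pi\<close>.\<close>

lemma Lp_approx_bounded_by_continuous:
  fixes u :: "real \<Rightarrow> real"
  assumes u: "u \<in> borel_measurable torus" and M: "\<And>x. \<bar>u x\<bar> \<le> M" and p: "0 < p" and e: "0 < e"
  shows "\<exists>h \<delta>. continuous_on UNIV h \<and> 0 < \<delta> \<and> \<delta> < pi / 2 \<and> (\<forall>t. pi - \<delta> \<le> \<bar>t\<bar> \<longrightarrow> h t = 0)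
           \<and> (\<integral>x. \<bar>u x - h x\<bar> powr p \<partial>torus) < e"
proof -
  have M0: "0 \<le> M" using M[of 0] abs_ge_zero[of "u 0"] by linarith
  have "u measurable_on {-pi..pi}"
    using u by (subst measurable_on_iff_borel_measurable) (auto simp: torus_def)
  then obtain N g where N: "negligible N" and g: "\<And>n. continuous_on UNIV (g n)"
    and g_lim: "\<And>x. x \<notin> N \<Longrightarrow> (\<lambda>n. g n x) \<longlonglongrightarrow> (if x \<in> {-pi..pi} then u x else 0)"
    unfolding measurable_on_def by blast
  define c where "c n x = edge_cutoff n x * clip M (g n x)" for n x
  have c_cont: "continuous_on UNIV (c n)" for n
    unfolding c_def clip_def
    by (intro continuous_intros continuous_on_edge_cutoff g[THEN continuous_on_subset]) auto
  have c_bound: "\<bar>c n x\<bar> \<le> M" for n x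
  proof -
    have "\<bar>c n x\<bar> \<le> 1 * M"
      unfolding c_def abs_mult using abs_clip_le[OF M0] edge_cutoff_bounds
      by (intro mult_mono) auto
    then show ?thesis by simp
  qed
  have "(\<lambda>n. \<integral>x. \<bar>c n x - u x\<bar> powr p \<partial>torus) \<longlonglongrightarrow> 0"
  proof (rule tendsto_integral_powr_abs_diff[where w = "\<lambda>x. 2 * M", OF _ u _ _ _ p])
    show "c n \<in> borel_measurable torus" for n
      by (rule borel_measurable_torus_continuous[OF c_cont])
    have "negligible (N \<union> {-pi, pi})"
      using N by (simp add: negligible_Un)
    from AE_torus_not_in_negligible[OF this] AE_space
    show "AE x in torus. (\<lambda>n. c n x) \<longlonglongrightarrow> u x"
    proof eventually_elim
      case (elim x)
      then have x: "x \<notin> N" "\<bar>x\<bar> < pi" by auto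
      have "(\<lambda>n. g n x) \<longlonglongrightarrow> u x"
        using g_lim[OF x(1)] x(2) by (simp add: abs_le_iff less_imp_le)
      then have "(\<lambda>n. clip M (g n x)) \<longlonglongrightarrow> clip M (u x)"
        unfolding clip_def by (intro tendsto_intros)
      with tendsto_edge_cutoff[OF x(2)] have "(\<lambda>n. c n x) \<longlonglongrightarrow> 1 * clip M (u x)"
        unfolding c_def by (rule tendsto_mult)
      then show ?case using clip_id[OF M] by simp
    qed
    show "\<bar>c n x - u x\<bar> \<le> 2 * M" for n x
      using c_bound[of n x] M[of x] by linarith
  qed simp
  then obtain n where n: "(\<integral>x. \<bar>c n x - u x\<bar> powr p \<partial>torus) < e"
    using eventually_less_of_tendsto_0 e by blast
  define \<delta> where "\<delta> = 1 / (2 * (real n + 1))"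
  have "0 < \<delta>" "\<delta> \<le> 1 / 2"
    unfolding \<delta>_def by (simp_all add: field_simps)
  moreover have "c n t = 0" if "pi - \<delta> \<le> \<bar>t\<bar>" for t
    using edge_cutoff_eq_0 that by (simp add: c_def \<delta>_def)
  ultimately show ?thesis
    using c_cont n pi_gt3 by (intro exI[of _ "c n"] exI[of _ \<delta>]) (auto simp: abs_minus_commute)
qed

lemma Lp_approx_continuous_by_trig_poly:
  assumes h: "continuous_on UNIV h" and \<delta>: "0 < \<delta>" "\<delta> < pi / 2"
    and h_0: "\<And>t. pi - \<delta> \<le> \<bar>t\<bar> \<Longrightarrow> h t = 0" and p: "0 < p" and e: "0 < e"
  shows "\<exists>P \<in> trig_poly. (\<integral>x. \<bar>h x - P x\<bar> powr p \<partial>torus) < e"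
proof -
  define \<eta> where "\<eta> = (e / (4 * pi)) powr (1 / p)"
  have "0 < \<eta>"
    using e by (simp add: \<eta>_def)
  then obtain P where P: "P \<in> trig_poly" and hP: "\<forall>t \<in> {-pi..pi}. \<bar>h t - P t\<bar> < \<eta>"
    using trig_poly_uniform_approx[OF h \<delta> h_0] by blast
  have hP_le: "\<bar>h x - P x\<bar> powr p \<le> \<eta> powr p" if "x \<in> {-pi..pi}" for x
    using hP that p by (intro powr_mono2) (auto intro: less_imp_le)
  have "integrable torus (\<lambda>x. \<bar>h x - P x\<bar> powr p)"
    using Lp_diff[OF Lp_if_continuous[OF h] Lp_trig_poly[OF P]] p by (simp add: Lp_def)
  then have "(\<integral>x. \<bar>h x - P x\<bar> powr p \<partial>torus) \<le> (\<integral>x. \<eta> powr p \<partial>torus)"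
    using hP_le by (intro integral_mono) auto
  also have "\<dots> = e / 2"
    using e p by (subst integral_torus_const) (simp add: \<eta>_def powr_powr)
  finally show ?thesis
    using P e by (intro bexI[OF _ P]) linarith
qed

theorem trig_poly_dense_Lp:
  assumes f: "f \<in> Lp p" and p: "0 < p" and e: "0 < e"
  shows "\<exists>P \<in> trig_poly. (\<integral>x. \<bar>f x - P x\<bar> powr p \<partial>torus) < e"
proof -
  define A where "A = 2 powr p"
  have A: "1 \<le> A"
    using p by (simp add: A_def ge_one_powr_ge_zero)
  define e' where "e' = e / (4 * A * A)"
  have e': "0 < e'"
    using e A by (simp add: e'_def)
  obtain M where M: "0 \<le> M" and u: "(\<lambda>x. clip M (f x)) \<in> Lp p"
    and fu: "(\<integral>x. \<bar>f x - clip M (f x)\<bar> powr p \<partial>torus) < e'"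
    using Lp_approx_by_bounded[OF f p e'] by blast
  obtain h \<delta> where h: "continuous_on UNIV h" and \<delta>: "0 < \<delta>" "\<delta> < pi / 2"
    and h_0: "\<forall>t. pi - \<delta> \<le> \<bar>t\<bar> \<longrightarrow> h t = 0"
    and uh: "(\<integral>x. \<bar>clip M (f x) - h x\<bar> powr p \<partial>torus) < e'"
    using Lp_approx_bounded_by_continuous[of "\<lambda>x. clip M (f x)", OF _ abs_clip_le[OF M] p e'] u
    unfolding Lp_def by blast
  obtain P where P: "P \<in> trig_poly" and hP: "(\<integral>x. \<bar>h x - P x\<bar> powr p \<partial>torus) < e'"
    using Lp_approx_continuous_by_trig_poly[OF h \<delta> _ p e'] h_0 by blast
  have p0: "0 \<le> p" using p by simp
  note h_Lp = Lp_if_continuous[OF h p0] and P_Lp = Lp_trig_poly[OF P p0]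
  have "(\<integral>x. \<bar>clip M (f x) - P x\<bar> powr p \<partial>torus) \<le> A * (e' + e')"
    using integral_powr_abs_diff_triangle[OF u h_Lp P_Lp p0] uh hP A
    unfolding A_def[symmetric] by (meson add_mono less_imp_le mult_left_mono order_trans zero_le_one)
  then have "(\<integral>x. \<bar>f x - P x\<bar> powr p \<partial>torus) \<le> A * (e' + A * (e' + e'))"
    using integral_powr_abs_diff_triangle[OF f u P_Lp p0] fu A
    unfolding A_def[symmetric] by (meson add_mono less_imp_le mult_left_mono order_trans zero_le_one)
  also have "\<dots> \<le> A * (A * e' + A * (e' + e'))"
    using A e' by (intro mult_left_mono add_right_mono) auto
  also have "\<dots> = 3 * A * A * e'"
    by (simp add: algebra_simps)
  also have "\<dots> < e"
    using A e by (simp add: e'_def)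
  finally show ?thesis
    using P by blast
qed


section \<open>Coordinate functionals on \<open>L\<^sup>p\<close>\<close>

lemma Lp_integrable:
  assumes f: "f \<in> Lp p" and p: "1 \<le> p"
  shows "integrable torus f"
proof -
  have fm: "f \<in> borel_measurable torus" and fi: "integrable torus (\<lambda>x. \<bar>f x\<bar> powr p)"
    using f by (auto simp: Lp_def)
  have "\<bar>f x\<bar> \<le> 1 + \<bar>f x\<bar> powr p" for x
  proof (cases "\<bar>f x\<bar> \<le> 1")
    case False
    then have "\<bar>f x\<bar> powr 1 \<le> \<bar>f x\<bar> powr p"
      using p by (intro powr_mono) auto
    then show ?thesis using False by simp
  qed (use powr_ge_zero[of "\<bar>f x\<bar>" p] in linarith)
  then show ?thesis
    by (intro Bochner_Integration.integrable_bound[OF Bochner_Integration.integrable_add[OF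
          integrable_torus_const[of 1] fi] fm] AE_I2) auto
qed

lemma integrable_mult_trig:
  assumes f: "f \<in> Lp p" and p: "1 \<le> p"
  shows "integrable torus (\<lambda>x. f x * trig i x)"
proof (rule Bochner_Integration.integrable_bound[OF Lp_integrable[OF f p]])
  show "(\<lambda>x. f x * trig i x) \<in> borel_measurable torus"
    using f borel_measurable_torus_continuous[OF continuous_on_trig]
    by (intro borel_measurable_times) (auto simp: Lp_def)
  show "AE x in torus. norm (f x * trig i x) \<le> norm (f x)"
    using abs_trig_le_1 by (intro AE_I2) (auto simp: abs_mult intro: mult_left_le)
qed

lemma fourier_add:
  assumes "f \<in> Lp p" "g \<in> Lp p" "1 \<le> p"
  shows "fourier (\<lambda>x. f x + g x) i = fourier f i + fourier g i"
  unfolding fourier_def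
  using integrable_mult_trig[OF assms(1,3)] integrable_mult_trig[OF assms(2,3)]
  by (simp add: distrib_right)

lemma fourier_scale: "fourier (\<lambda>x. c * f x) i = c * fourier f i"
  unfolding fourier_def by (simp add: mult.assoc)

text \<open>Pointwise \<open>\<bar>f\<bar> \<le> 1 / l + l powr (p - 1) * \<bar>f\<bar> powr p\<close>, integrated against \<open>\<bar>trig i\<bar> \<le> 1\<close>.\<close>

lemma abs_fourier_le:
  assumes f: "f \<in> Lp p" and p: "1 \<le> p" and l: "0 < l"
  shows "\<bar>fourier f i\<bar> \<le> 2 * pi / l + l powr (p - 1) * (\<integral>x. \<bar>f x\<bar> powr p \<partial>torus)"
proof -
  have fi: "integrable torus (\<lambda>x. \<bar>f x\<bar> powr p)"
    using f by (simp add: Lp_def)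
  have pointwise: "\<bar>f x * trig i x\<bar> \<le> (1 + l powr p * \<bar>f x\<bar> powr p) / l" for x
  proof -
    have "l * \<bar>f x\<bar> \<le> 1 + (l * \<bar>f x\<bar>) powr p"
    proof (cases "l * \<bar>f x\<bar> \<le> 1")
      case False
      then have "(l * \<bar>f x\<bar>) powr 1 \<le> (l * \<bar>f x\<bar>) powr p"
        using p by (intro powr_mono) auto
      then show ?thesis using False by simp
    qed (use powr_ge_zero[of "l * \<bar>f x\<bar>" p] in linarith)
    then have "\<bar>f x\<bar> \<le> (1 + l powr p * \<bar>f x\<bar> powr p) / l"
      using l by (simp add: powr_mult field_simps)
    moreover have "\<bar>f x * trig i x\<bar> \<le> \<bar>f x\<bar>"
      using abs_trig_le_1 by (auto simp: abs_mult intro: mult_left_le)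
    ultimately show ?thesis by linarith
  qed
  have "\<bar>fourier f i\<bar> \<le> (\<integral>x. \<bar>f x * trig i x\<bar> \<partial>torus)"
    unfolding fourier_def by (rule integral_abs_bound)
  also have "\<dots> \<le> (\<integral>x. (1 + l powr p * \<bar>f x\<bar> powr p) / l \<partial>torus)"
    using pointwise fi integrable_mult_trig[OF f p]
    by (intro integral_mono integrable_divide Bochner_Integration.integrable_add
        integrable_mult_right integrable_abs) auto
  also have "\<dots> = (2 * pi + l powr p * (\<integral>x. \<bar>f x\<bar> powr p \<partial>torus)) / l"
    using fi by (simp add: integral_torus_const)
  also have "\<dots> = 2 * pi / l + l powr (p - 1) * (\<integral>x. \<bar>f x\<bar> powr p \<partial>torus)"
    using l by (simp add: powr_diff field_simps)
  finally show ?thesis .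
qed

lemma fourier_small:
  assumes p: "1 \<le> p" and e: "0 < e"
  shows "\<exists>d > 0. \<forall>u \<in> Lp p. (\<integral>x. \<bar>u x\<bar> powr p \<partial>torus) < d \<longrightarrow> \<bar>fourier u i\<bar> \<le> e"
proof -
  define l where "l = 4 * pi / e"
  define d where "d = e / (2 * l powr (p - 1))"
  have l: "0 < l" and d: "0 < d"
    using e by (simp_all add: l_def d_def)
  have "\<bar>fourier u i\<bar> \<le> e" if u: "u \<in> Lp p" and small: "(\<integral>x. \<bar>u x\<bar> powr p \<partial>torus) < d" for u
  proof -
    have "\<bar>fourier u i\<bar> \<le> 2 * pi / l + l powr (p - 1) * (\<integral>x. \<bar>u x\<bar> powr p \<partial>torus)"
      by (rule abs_fourier_le[OF u p l])
    also have "\<dots> \<le> 2 * pi / l + l powr (p - 1) * d"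
      using small by (intro add_left_mono mult_left_mono) auto
    also have "\<dots> = e"
      using e by (simp add: l_def d_def)
    finally show ?thesis .
  qed
  then show ?thesis using d by blast
qed

lemma abs_le_lnorm:
  assumes x: "x \<in> lspace q" and q: "1 \<le> q"
  shows "\<bar>x i\<bar> \<le> lnorm q x"
proof (cases "q = \<infinity>")
  case True
  then obtain B where "\<And>n. \<bar>x n\<bar> \<le> B"
    using x by (auto simp: lspace_def)
  then have "bdd_above (range (\<lambda>n. \<bar>x n\<bar>))"
    unfolding bdd_above_def by auto
  then show ?thesis
    using True cSUP_upper[of i UNIV "\<lambda>n. \<bar>x n\<bar>"] by (simp add: lnorm_def)
next
  case False
  then obtain Q where qQ: "q = ereal Q" and Q: "1 \<le> Q"
    using q by (cases q) auto
  have "summable (\<lambda>n. \<bar>x n\<bar> powr Q)"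
    using x qQ by (simp add: lspace_def)
  from sum_le_suminf[OF this, of "{i}"]
  have "\<bar>x i\<bar> powr Q \<le> (\<Sum>n. \<bar>x n\<bar> powr Q)"
    by simp
  then have "(\<bar>x i\<bar> powr Q) powr (1 / Q) \<le> (\<Sum>n. \<bar>x n\<bar> powr Q) powr (1 / Q)"
    using Q by (intro powr_mono2) auto
  then show ?thesis
    using Q by (simp add: lnorm_def qQ powr_powr)
qed

locale Lp_lspace_operator =
  fixes p :: real and q :: ereal and T :: "(real \<Rightarrow> real) \<Rightarrow> nat \<Rightarrow> real"
  assumes p_ge_1: "1 \<le> p" and q_ge_1: "1 \<le> q"
    and T_into: "\<forall>f \<in> Lp p. T f \<in> lspace q"
    and T_add: "\<forall>f \<in> Lp p. \<forall>g \<in> Lp p. T (\<lambda>x. f x + g x) = (\<lambda>i. T f i + T g i)"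
    and T_scale: "\<forall>f \<in> Lp p. \<forall>c. T (\<lambda>x. c * f x) = (\<lambda>i. c * T f i)"
    and T_bounded: "\<exists>K. \<forall>f \<in> Lp p. lnorm q (T f) \<le> K * Lp_norm p f"
begin

lemma T_small:
  assumes e: "0 < e"
  shows "\<exists>d > 0. \<forall>u \<in> Lp p. (\<integral>x. \<bar>u x\<bar> powr p \<partial>torus) < d \<longrightarrow> \<bar>T u i\<bar> \<le> e"
proof -
  obtain K where K: "\<And>f. f \<in> Lp p \<Longrightarrow> lnorm q (T f) \<le> K * Lp_norm p f"
    using T_bounded by blast
  define K' where "K' = max K 0 + 1"
  have K': "0 < K'" "K \<le> K'"
    by (simp_all add: K'_def)
  define d where "d = (e / K') powr p"
  have d: "0 < d"
    using e K' by (simp add: d_def)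
  have "\<bar>T u i\<bar> \<le> e" if u: "u \<in> Lp p" and small: "(\<integral>x. \<bar>u x\<bar> powr p \<partial>torus) < d" for u
  proof -
    have "\<bar>T u i\<bar> \<le> K * Lp_norm p u"
      using abs_le_lnorm[OF _ q_ge_1] T_into u K[OF u] by (meson order_trans)
    also have "\<dots> \<le> K' * Lp_norm p u"
      using K' by (intro mult_right_mono) (auto simp: Lp_norm_def)
    also have "Lp_norm p u \<le> d powr (1 / p)"
      unfolding Lp_norm_def using small p_ge_1 by (intro powr_mono2) auto
    also have "d powr (1 / p) = e / K'"
      using e K' p_ge_1 by (simp add: d_def powr_powr)
    finally show ?thesis
      using K' by (simp add: mult_left_mono)
  qed
  then show ?thesis using d by blast
qed

lemma T_eq_multiplier_on_trig_poly:
  assumes diagonal: "\<forall>n i. i \<noteq> n \<longrightarrow> T (trig n) i = 0" and P: "P \<in> trig_poly"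
  shows "T P i = T (trig i) i * fourier P i"
  using P
proof (induction P rule: trig_poly.induct)
  case (trig_poly_trig k)
  then show ?case using diagonal by (auto simp: fourier_trig)
next
  case (trig_poly_add f h)
  have "f \<in> Lp p" "h \<in> Lp p"
    using p_ge_1 Lp_trig_poly trig_poly_add.hyps by auto
  then show ?case
    using T_add fourier_add[OF _ _ p_ge_1] trig_poly_add.IH by (simp add: distrib_left)
next
  case (trig_poly_scale f c)
  have "f \<in> Lp p"
    using p_ge_1 Lp_trig_poly trig_poly_scale.hyps by auto
  then show ?case
    using T_scale trig_poly_scale.IH by (simp add: fourier_scale)
qed

lemma T_eq_fourier_multiplier:
  assumes diagonal: "\<forall>n i. i \<noteq> n \<longrightarrow> T (trig n) i = 0" and f: "f \<in> Lp p"
  shows "T f i = T (trig i) i * fourier f i"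
proof -
  define G where "G = \<bar>T (trig i) i\<bar> + 1"
  have G: "0 < G" by (simp add: G_def)
  have "\<bar>T f i - T (trig i) i * fourier f i\<bar> \<le> 0 + e" if e: "0 < e" for e
  proof -
    have "0 < e / 2" "0 < e / (2 * G)"
      using e G by simp_all
    obtain d1 where d1: "0 < d1"
      and T_u: "\<And>u. u \<in> Lp p \<Longrightarrow> (\<integral>x. \<bar>u x\<bar> powr p \<partial>torus) < d1 \<Longrightarrow> \<bar>T u i\<bar> \<le> e / 2"
      using T_small[OF \<open>0 < e / 2\<close>, of i] by blast
    obtain d2 where d2: "0 < d2"
      and F_u: "\<And>u. u \<in> Lp p \<Longrightarrow> (\<integral>x. \<bar>u x\<bar> powr p \<partial>torus) < d2 \<Longrightarrow> \<bar>fourier u i\<bar> \<le> e / (2 * G)"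
      using fourier_small[OF p_ge_1 \<open>0 < e / (2 * G)\<close>, of i] by blast
    obtain P where P: "P \<in> trig_poly" and fP: "(\<integral>x. \<bar>f x - P x\<bar> powr p \<partial>torus) < min d1 d2"
      using trig_poly_dense_Lp[OF f _, of "min d1 d2"] p_ge_1 d1 d2 by auto
    define u where "u x = f x - P x" for x
    have P_Lp: "P \<in> Lp p" and u: "u \<in> Lp p"
      using Lp_trig_poly[OF P] Lp_diff[OF f, of P] p_ge_1 by (auto simp: u_def[abs_def])
    have f_eq: "f = (\<lambda>x. u x + P x)"
      by (simp add: u_def)
    have "T f i - T (trig i) i * fourier f i = T u i - T (trig i) i * fourier u i"
      using T_add u P_Lp fourier_add[OF u P_Lp p_ge_1, of i]
        T_eq_multiplier_on_trig_poly[OF diagonal P, of i]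
      by (subst (1 2) f_eq) (simp add: algebra_simps)
    also have "\<bar>\<dots>\<bar> \<le> \<bar>T u i\<bar> + \<bar>T (trig i) i\<bar> * \<bar>fourier u i\<bar>"
      by (metis abs_mult abs_triangle_ineq4)
    also have "\<dots> \<le> \<bar>T u i\<bar> + G * \<bar>fourier u i\<bar>"
      unfolding G_def by (intro add_left_mono mult_right_mono) auto
    also have "\<dots> \<le> e / 2 + G * (e / (2 * G))"
      using T_u[OF u] F_u[OF u] fP G by (intro add_mono mult_left_mono) (auto simp: u_def)
    also have "\<dots> = 0 + e"
      using G by simp
    finally show ?thesis .
  qed
  then show ?thesis
    using field_le_epsilon[of "\<bar>T f i - T (trig i) i * fourier f i\<bar>" 0] by simp
qed

lemma fourier_multiplier_iff_diagonal:
  "(\<exists>g \<in> S. \<forall>f \<in> Lp p. T f = (\<lambda>i. g i * fourier f i)) \<longleftrightarrow>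
     (\<forall>n i. i \<noteq> n \<longrightarrow> T (trig n) i = 0) \<and> (\<lambda>i. T (trig i) i) \<in> S"
proof
  assume "\<exists>g \<in> S. \<forall>f \<in> Lp p. T f = (\<lambda>i. g i * fourier f i)"
  then obtain g where g: "g \<in> S" "\<And>f. f \<in> Lp p \<Longrightarrow> T f = (\<lambda>i. g i * fourier f i)"
    by blast
  have "trig n \<in> Lp p" for n
    using p_ge_1 by (intro Lp_trig_poly trig_poly_trig) simp
  then have "T (trig n) i = (if n = i then g i else 0)" for n i
    using g(2) fourier_trig by simp
  then show "(\<forall>n i. i \<noteq> n \<longrightarrow> T (trig n) i = 0) \<and> (\<lambda>i. T (trig i) i) \<in> S"
    using g(1) by simp
next
  assume "(\<forall>n i. i \<noteq> n \<longrightarrow> T (trig n) i = 0) \<and> (\<lambda>i. T (trig i) i) \<in> S"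
  then show "\<exists>g \<in> S. \<forall>f \<in> Lp p. T f = (\<lambda>i. g i * fourier f i)"
    by (intro bexI[of _ "\<lambda>i. T (trig i) i"] ballI ext T_eq_fourier_multiplier) auto
qed

end


section \<open>A finite-sum description of \<open>l\<^sup>s\<close>\<close>

text \<open>For \<open>\<sigma> = s'\<close> this is the Koethe-dual description of \<open>l\<^sup>s\<close> used in condition (c).\<close>

definition dual_bounded :: "real \<Rightarrow> (nat \<Rightarrow> real) \<Rightarrow> bool" where
  "dual_bounded \<sigma> g \<longleftrightarrow> (\<exists>C > 0. \<forall>N x. (\<forall>i. \<bar>x i\<bar> \<le> 1) \<longrightarrow>
     (\<Sum>i<N. x i * g i) \<le> C * (\<Sum>i<N. \<bar>x i\<bar> powr \<sigma>) powr (1 / \<sigma>))"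

lemma lspace_infinity_iff_dual_bounded: "g \<in> lspace \<infinity> \<longleftrightarrow> dual_bounded 1 g"
proof
  assume "g \<in> lspace \<infinity>"
  then obtain B where B: "\<And>n. \<bar>g n\<bar> \<le> B"
    by (auto simp: lspace_def)
  have "(\<Sum>i<N. x i * g i) \<le> (\<bar>B\<bar> + 1) * (\<Sum>i<N. \<bar>x i\<bar>)" for N x
  proof -
    have "x i * g i \<le> (\<bar>B\<bar> + 1) * \<bar>x i\<bar>" for i
    proof -
      have "x i * g i \<le> \<bar>x i\<bar> * \<bar>g i\<bar>"
        by (simp add: abs_mult[symmetric])
      also have "\<dots> \<le> \<bar>x i\<bar> * (\<bar>B\<bar> + 1)"
        using B[of i] by (intro mult_left_mono) auto
      finally show ?thesis by (simp add: mult.commute)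
    qed
    then show ?thesis
      by (simp add: sum_distrib_left sum_mono)
  qed
  then show "dual_bounded 1 g"
    unfolding dual_bounded_def by (intro exI[of _ "\<bar>B\<bar> + 1"]) simp
next
  assume "dual_bounded 1 g"
  then obtain C where C0: "0 < C"
    and C: "\<And>N x. (\<forall>i. \<bar>x i\<bar> \<le> 1) \<Longrightarrow> (\<Sum>i<N. x i * g i) \<le> C * (\<Sum>i<N. \<bar>x i\<bar>)"
    unfolding dual_bounded_def by auto
  have "\<bar>g n\<bar> \<le> C" for n
  proof -
    define x where "x i = (if i = n then sgn (g n) else 0)" for i
    have x: "\<forall>i. \<bar>x i\<bar> \<le> 1"
      by (simp add: x_def abs_sgn_eq)
    have "(\<Sum>i<Suc n. x i * g i) = (\<Sum>i<Suc n. if i = n then \<bar>g n\<bar> else 0)"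
      by (intro sum.cong) (auto simp: x_def abs_sgn mult.commute)
    then have "\<bar>g n\<bar> \<le> C * (\<Sum>i<Suc n. \<bar>x i\<bar>)"
      using C[OF x, of "Suc n"] by simp
    also have "(\<Sum>i<Suc n. \<bar>x i\<bar>) = (\<Sum>i<Suc n. if i = n then \<bar>sgn (g n)\<bar> else 0)"
      by (intro sum.cong) (auto simp: x_def)
    also have "C * \<dots> \<le> C"
      using C0 by (simp add: abs_sgn_eq)
    finally show ?thesis .
  qed
  then show "g \<in> lspace \<infinity>"
    by (auto simp: lspace_def)
qed

text \<open>Hoelder's inequality for finite sums, obtained from Young's inequality after
  normalising \<open>x\<close>.\<close>

lemma dual_bounded_if_lspace:
  assumes S: "1 < S" and \<sigma>: "\<sigma> = S / (S - 1)" and g: "g \<in> lspace (ereal S)"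
  shows "dual_bounded \<sigma> g"
proof -
  have \<sigma>_gt_1: "1 < \<sigma>" and conj: "1 / \<sigma> + 1 / S = 1"
    using S by (simp_all add: \<sigma> field_simps)
  have sg: "summable (\<lambda>n. \<bar>g n\<bar> powr S)"
    using g by (simp add: lspace_def)
  define G where "G = (\<Sum>n. \<bar>g n\<bar> powr S)"
  have G: "0 \<le> G" "\<And>N. (\<Sum>i<N. \<bar>g i\<bar> powr S) \<le> G"
    unfolding G_def using sg by (auto intro: suminf_nonneg sum_le_suminf)
  have "(\<Sum>i<N. \<bar>x i\<bar> * \<bar>g i\<bar>) \<le> (1 + G) * (\<Sum>i<N. \<bar>x i\<bar> powr \<sigma>) powr (1 / \<sigma>)" for N x
  proof (cases "\<forall>i<N. x i = 0")
    case False
    then obtain k where "k < N" "x k \<noteq> 0"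
      by auto
    then have "0 < (\<Sum>i<N. \<bar>x i\<bar> powr \<sigma>)"
      by (intro sum_pos2[of "{..<N}" k]) auto
    define A where "A = (\<Sum>i<N. \<bar>x i\<bar> powr \<sigma>) powr (1 / \<sigma>)"
    from \<open>0 < (\<Sum>i<N. \<bar>x i\<bar> powr \<sigma>)\<close> have A: "0 < A" "A powr \<sigma> = (\<Sum>i<N. \<bar>x i\<bar> powr \<sigma>)"
      using \<sigma>_gt_1 by (simp_all add: A_def powr_powr)
    have "(\<Sum>i<N. \<bar>x i\<bar> / A * \<bar>g i\<bar>) \<le> (\<Sum>i<N. (\<bar>x i\<bar> / A) powr \<sigma> / \<sigma> + \<bar>g i\<bar> powr S / S)"
    proof (intro sum_mono)
      fix i
      show "\<bar>x i\<bar> / A * \<bar>g i\<bar> \<le> (\<bar>x i\<bar> / A) powr \<sigma> / \<sigma> + \<bar>g i\<bar> powr S / S"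
        using Youngs_inequality[OF \<sigma>_gt_1 S conj, of "\<bar>x i\<bar> / A" "\<bar>g i\<bar>"] A(1) by simp
    qed
    also have "\<dots> = (\<Sum>i<N. \<bar>x i\<bar> powr \<sigma>) / A powr \<sigma> / \<sigma> + (\<Sum>i<N. \<bar>g i\<bar> powr S) / S"
      using A(1) by (simp add: sum.distrib sum_divide_distrib powr_divide)
    also have "(\<Sum>i<N. \<bar>x i\<bar> powr \<sigma>) / A powr \<sigma> / \<sigma> \<le> 1"
      using A \<open>0 < (\<Sum>i<N. \<bar>x i\<bar> powr \<sigma>)\<close> \<sigma>_gt_1 by simp
    also have "(\<Sum>i<N. \<bar>g i\<bar> powr S) / S \<le> G"
      using G S by (simp add: divide_le_eq) (smt (verit) mult_le_cancel_left1)
    finally have "(\<Sum>i<N. \<bar>x i\<bar> * \<bar>g i\<bar>) / A \<le> 1 + G"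
      by (simp add: sum_divide_distrib)
    then show ?thesis
      using A(1) unfolding A_def[symmetric] by (simp add: divide_le_eq mult.commute)
  qed simp
  moreover have "(\<Sum>i<N. x i * g i) \<le> (\<Sum>i<N. \<bar>x i\<bar> * \<bar>g i\<bar>)" for N x
    by (intro sum_mono) (simp add: abs_mult[symmetric])
  ultimately have "(\<Sum>i<N. x i * g i) \<le> (1 + G) * (\<Sum>i<N. \<bar>x i\<bar> powr \<sigma>) powr (1 / \<sigma>)" for N x
    by (meson order_trans)
  then show ?thesis
    unfolding dual_bounded_def using G(1) by (intro exI[of _ "1 + G"]) auto
qed

text \<open>Both sides are homogeneous in \<open>x\<close>.\<close>

lemma dual_bounded_unrestricted:
  assumes "dual_bounded \<sigma> g" and \<sigma>: "0 < \<sigma>"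
  shows "\<exists>C. \<forall>N x. (\<Sum>i<N. x i * g i) \<le> C * (\<Sum>i<N. \<bar>x i\<bar> powr \<sigma>) powr (1 / \<sigma>)"
proof -
  obtain C where C: "\<And>N x. (\<forall>i. \<bar>x i\<bar> \<le> 1) \<Longrightarrow>
      (\<Sum>i<N. x i * g i) \<le> C * (\<Sum>i<N. \<bar>x i\<bar> powr \<sigma>) powr (1 / \<sigma>)"
    using assms(1) unfolding dual_bounded_def by blast
  have "(\<Sum>i<N. x i * g i) \<le> C * (\<Sum>i<N. \<bar>x i\<bar> powr \<sigma>) powr (1 / \<sigma>)" for N x
  proof -
    define \<mu> where "\<mu> = 1 + (\<Sum>i<N. \<bar>x i\<bar>)"
    have \<mu>: "0 < \<mu>"
      by (simp add: \<mu>_def add_pos_nonneg sum_nonneg)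
    define y where "y i = (if i < N then x i / \<mu> else 0)" for i
    have "\<bar>y i\<bar> \<le> 1" for i
    proof (cases "i < N")
      case True
      then have "\<bar>x i\<bar> \<le> \<mu>"
        using member_le_sum[of i "{..<N}" "\<lambda>i. \<bar>x i\<bar>"] by (simp add: \<mu>_def)
      then show ?thesis using True \<mu> by (simp add: y_def abs_divide)
    qed (simp add: y_def)
    then have "(\<Sum>i<N. y i * g i) \<le> C * (\<Sum>i<N. \<bar>y i\<bar> powr \<sigma>) powr (1 / \<sigma>)"
      using C by blast
    moreover have "(\<Sum>i<N. y i * g i) = (\<Sum>i<N. x i * g i) / \<mu>"
      by (simp add: y_def sum_divide_distrib)
    moreover have "(\<Sum>i<N. \<bar>y i\<bar> powr \<sigma>) powr (1 / \<sigma>) = (\<Sum>i<N. \<bar>x i\<bar> powr \<sigma>) powr (1 / \<sigma>) / \<mu>"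
    proof -
      have "(\<Sum>i<N. \<bar>y i\<bar> powr \<sigma>) = (\<Sum>i<N. \<bar>x i\<bar> powr \<sigma>) / \<mu> powr \<sigma>"
        using \<mu> by (simp add: y_def sum_divide_distrib abs_divide powr_divide)
      then show ?thesis
        using \<mu> \<sigma> by (simp add: powr_divide powr_powr sum_nonneg)
    qed
    ultimately show ?thesis
      using \<mu> by (simp add: divide_le_eq field_simps)
  qed
  then show ?thesis by blast
qed

text \<open>Testing against \<open>x i = sgn (g i) * \<bar>g i\<bar> powr (S - 1)\<close> bounds the partial sums of
  \<open>\<bar>g i\<bar> powr S\<close> by \<open>C powr S\<close>.\<close>

lemma lspace_if_dual_bounded:
  assumes S: "1 < S" and \<sigma>: "\<sigma> = S / (S - 1)" and g: "dual_bounded \<sigma> g"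
  shows "g \<in> lspace (ereal S)"
proof -
  have \<sigma>_gt_1: "1 < \<sigma>" and conj: "1 / \<sigma> + 1 / S = 1" and S_\<sigma>: "(S - 1) * \<sigma> = S"
    using S by (simp_all add: \<sigma> field_simps)
  obtain C where C: "\<And>N x. (\<Sum>i<N. x i * g i) \<le> C * (\<Sum>i<N. \<bar>x i\<bar> powr \<sigma>) powr (1 / \<sigma>)"
    using dual_bounded_unrestricted[OF g] \<sigma>_gt_1 by fastforce
  have "(\<Sum>i<N. \<bar>g i\<bar> powr S) \<le> C powr S" for N
  proof -
    define T where "T = (\<Sum>i<N. \<bar>g i\<bar> powr S)"
    define x where "x i = sgn (g i) * \<bar>g i\<bar> powr (S - 1)" for i
    have "x i * g i = \<bar>g i\<bar> powr (S - 1) * \<bar>g i\<bar>" for i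
      by (simp add: x_def sgn_mult_self_eq mult_ac abs_sgn)
    also have "\<dots> i = \<bar>g i\<bar> powr (S - 1 + 1)" for i
      by (subst powr_add) simp
    finally have xg: "x i * g i = \<bar>g i\<bar> powr S" for i
      by simp
    have "\<bar>x i\<bar> powr \<sigma> = \<bar>g i\<bar> powr S" for i
      using S_\<sigma> by (simp add: x_def abs_mult powr_powr abs_sgn_eq)
    then have T_le: "T \<le> C * T powr (1 / \<sigma>)"
      using C[of x N] by (simp add: T_def xg)
    show ?thesis
    proof (cases "T = 0")
      case False
      moreover have "0 \<le> T"
        by (simp add: T_def sum_nonneg)
      ultimately have T: "0 < T"
        by simp
      have "T = T powr (1 / \<sigma>) * T powr (1 / S)"
        using T conj by (simp add: powr_add[symmetric])
      with T_le have "T powr (1 / \<sigma>) * T powr (1 / S) \<le> T powr (1 / \<sigma>) * C"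
        by (simp add: mult.commute)
      then have "T powr (1 / S) \<le> C"
        using T by simp
      then have "(T powr (1 / S)) powr S \<le> C powr S"
        using S by (intro powr_mono2) auto
      then show ?thesis
        using T S by (simp add: T_def[symmetric] powr_powr)
    qed (simp add: T_def)
  qed
  then have "summable (\<lambda>n. \<bar>g n\<bar> powr S)"
    by (intro summableI_nonneg_bounded) auto
  then show ?thesis
    by (simp add: lspace_def)
qed

lemma lspace_s_exp_iff_dual_bounded:
  assumes r: "1 < r" and q: "1 < q"
  defines "s \<equiv> s_exp (conj_exp (ereal r)) q"
  shows "g \<in> lspace s \<longleftrightarrow> dual_bounded (real_of_ereal (conj_exp s)) g"
    and "conj_exp (ereal r) \<le> q \<Longrightarrow> real_of_ereal (conj_exp s) = 1"
proof -
  define r' where "r' = r / (r - 1)"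
  have r': "conj_exp (ereal r) = ereal r'" "1 < r'"
    using r by (simp_all add: conj_exp_def r'_def field_simps)
  have "(g \<in> lspace s \<longleftrightarrow> dual_bounded (real_of_ereal (conj_exp s)) g) \<and>
        (conj_exp (ereal r) \<le> q \<longrightarrow> real_of_ereal (conj_exp s) = 1)"
  proof (cases "q < ereal r'")
    case True
    then obtain Q where qQ: "q = ereal Q" and Q: "1 < Q" "Q < r'"
      using q by (cases q) auto
    define S where "S = r' * Q / (r' - Q)"
    have "r' < r' * Q"
      using r' Q by simp
    then have "r' - Q < r' * Q"
      using Q by linarith
    then have S: "1 < S"
      using Q by (simp add: S_def less_divide_eq_1_pos)
    have s: "s = ereal S"
      using Q by (simp add: s_def s_exp_def r' qQ S_def)
    then have \<sigma>: "real_of_ereal (conj_exp s) = S / (S - 1)"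
      using S by (simp add: conj_exp_def)
    have "g \<in> lspace s \<longleftrightarrow> dual_bounded (S / (S - 1)) g"
      using dual_bounded_if_lspace[OF S refl] lspace_if_dual_bounded[OF S refl] s by blast
    moreover have "\<not> conj_exp (ereal r) \<le> q"
      using True r' by simp
    ultimately show ?thesis
      unfolding \<sigma> by blast
  next
    case False
    then have "s = \<infinity>"
      by (auto simp: s_def s_exp_def r')
    then show ?thesis
      by (simp add: conj_exp_def lspace_infinity_iff_dual_bounded)
  qed
  then show "g \<in> lspace s \<longleftrightarrow> dual_bounded (real_of_ereal (conj_exp s)) g"
    and "conj_exp (ereal r) \<le> q \<Longrightarrow> real_of_ereal (conj_exp s) = 1"
    by blast+
qed


section \<open>Matrix conditions\<close>

lemma sum_sum_diagonal:
  fixes A R :: "nat \<Rightarrow> nat \<Rightarrow> real"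
  assumes off_diagonal: "\<And>i j. i \<noteq> j \<Longrightarrow> A i j = 0"
  shows "(\<Sum>i<n. \<Sum>j<m. R i j * A i j) = (\<Sum>i<min n m. R i i * A i i)"
proof -
  have "(\<Sum>j<m. R i j * A i j) = (\<Sum>j<m. if i = j then R i i * A i i else 0)" for i
    using off_diagonal by (intro sum.cong) auto
  then have "(\<Sum>j<m. R i j * A i j) = (if i \<in> {..<m} then R i i * A i i else 0)" for i
    by simp
  then have "(\<Sum>i<n. \<Sum>j<m. R i j * A i j) = (\<Sum>i\<in>{..<n} \<inter> {..<m}. R i i * A i i)"
    by (simp add: sum.inter_restrict)
  also have "{..<n} \<inter> {..<m} = {..<min n m}"
    by auto
  finally show ?thesis .
qed

text \<open>A test matrix supported off the diagonal makes the right-hand side vanish.\<close>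

lemma off_diagonal_eq_0_if_matrix_bound:
  fixes A :: "nat \<Rightarrow> nat \<Rightarrow> real"
  assumes bound: "\<And>n m R. \<forall>i j. \<bar>R i j\<bar> \<le> 1 \<Longrightarrow>
      (\<Sum>i<n. \<Sum>j<m. R i j * A i j) \<le> C * (\<Sum>i<min n m. \<bar>R i i\<bar> powr \<sigma>) powr (1 / \<sigma>)"
    and "a \<noteq> b"
  shows "A a b = 0"
proof -
  have "c * A a b \<le> 0" if c: "\<bar>c\<bar> \<le> 1" for c
  proof -
    define R where "R i j = (if i = a \<and> j = b then c else 0)" for i j
    have "\<forall>i j. \<bar>R i j\<bar> \<le> 1"
      using c by (simp add: R_def)
    then have "(\<Sum>i<Suc a. \<Sum>j<Suc b. R i j * A i j)
        \<le> C * (\<Sum>i<min (Suc a) (Suc b). \<bar>R i i\<bar> powr \<sigma>) powr (1 / \<sigma>)"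
      by (rule bound)
    moreover have "(\<Sum>j<Suc b. R i j * A i j) = (if i = a then c * A a b else 0)" for i
      by (simp add: R_def sum.delta')
    then have "(\<Sum>i<Suc a. \<Sum>j<Suc b. R i j * A i j) = c * A a b"
      by (simp add: sum.delta')
    moreover have "(\<Sum>i<min (Suc a) (Suc b). \<bar>R i i\<bar> powr \<sigma>) = 0"
      using \<open>a \<noteq> b\<close> by (simp add: R_def)
    ultimately show ?thesis
      by simp
  qed
  from this[of 1] this[of "-1"] show ?thesis by simp
qed

lemma diagonal_dual_bounded_iff_matrix_bound:
  fixes A :: "nat \<Rightarrow> nat \<Rightarrow> real"
  shows "((\<forall>n i. i \<noteq> n \<longrightarrow> A i n = 0) \<and> dual_bounded \<sigma> (\<lambda>i. A i i)) \<longleftrightarrow>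
    (\<exists>C > 0. \<forall>n m. \<forall>R :: nat \<Rightarrow> nat \<Rightarrow> real. (\<forall>i j. \<bar>R i j\<bar> \<le> 1) \<longrightarrow>
        (\<Sum>i<n. \<Sum>j<m. R i j * A i j) \<le> C * (\<Sum>i<min n m. \<bar>R i i\<bar> powr \<sigma>) powr (1 / \<sigma>))"
    (is "?diagonal \<longleftrightarrow> (\<exists>C > 0. ?matrix_bound C)")
proof
  assume ?diagonal
  then obtain C where "C > 0" and C: "\<And>N x. (\<forall>i. \<bar>x i\<bar> \<le> 1) \<Longrightarrow>
      (\<Sum>i<N. x i * A i i) \<le> C * (\<Sum>i<N. \<bar>x i\<bar> powr \<sigma>) powr (1 / \<sigma>)"
    unfolding dual_bounded_def by blast
  have "?matrix_bound C"
  proof (intro allI impI)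
    fix n m and R :: "nat \<Rightarrow> nat \<Rightarrow> real"
    assume R: "\<forall>i j. \<bar>R i j\<bar> \<le> 1"
    have "(\<Sum>i<n. \<Sum>j<m. R i j * A i j) = (\<Sum>i<min n m. R i i * A i i)"
      using \<open>?diagonal\<close> by (intro sum_sum_diagonal) auto
    then show "(\<Sum>i<n. \<Sum>j<m. R i j * A i j) \<le> C * (\<Sum>i<min n m. \<bar>R i i\<bar> powr \<sigma>) powr (1 / \<sigma>)"
      using C[where x = "\<lambda>i. R i i" and N = "min n m"] R by simp
  qed
  then show "\<exists>C > 0. ?matrix_bound C"
    using \<open>C > 0\<close> by blast
next
  assume "\<exists>C > 0. ?matrix_bound C"
  then obtain C where "C > 0" and "?matrix_bound C"
    by blast
  then have C: "(\<Sum>i<n. \<Sum>j<m. R i j * A i j) \<le> C * (\<Sum>i<min n m. \<bar>R i i\<bar> powr \<sigma>) powr (1 / \<sigma>)"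
    if "\<forall>i j. \<bar>R i j\<bar> \<le> 1" for n m and R :: "nat \<Rightarrow> nat \<Rightarrow> real"
    using that by blast
  have off_diagonal: "A a b = 0" if "a \<noteq> b" for a b
    using off_diagonal_eq_0_if_matrix_bound[OF C that] .
  have "dual_bounded \<sigma> (\<lambda>i. A i i)"
    unfolding dual_bounded_def
  proof (intro exI[of _ C] conjI allI impI)
    fix N :: nat and x :: "nat \<Rightarrow> real"
    assume x: "\<forall>i. \<bar>x i\<bar> \<le> 1"
    define R where "R i j = (if i = j then x i else 0)" for i j
    have "\<forall>i j. \<bar>R i j\<bar> \<le> 1"
      using x by (simp add: R_def)
    then have "(\<Sum>i<N. \<Sum>j<N. R i j * A i j) \<le> C * (\<Sum>i<min N N. \<bar>R i i\<bar> powr \<sigma>) powr (1 / \<sigma>)"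
      by (rule C)
    then show "(\<Sum>i<N. x i * A i i) \<le> C * (\<Sum>i<N. \<bar>x i\<bar> powr \<sigma>) powr (1 / \<sigma>)"
      by (simp add: sum_sum_diagonal[OF off_diagonal] R_def)
  qed (rule \<open>C > 0\<close>)
  then show ?diagonal
    using off_diagonal by blast
qed

lemma row_bound_if_matrix_bound:
  fixes A :: "nat \<Rightarrow> nat \<Rightarrow> real"
  assumes bound: "\<And>n m R. \<forall>i j. \<bar>R i j\<bar> \<le> 1 \<Longrightarrow>
      (\<Sum>i<n. \<Sum>j<m. R i j * A i j) \<le> C * (\<Sum>i<min n m. \<bar>R i i\<bar>)"
    and R: "\<forall>j. \<bar>R j\<bar> \<le> 1"
  shows "(\<Sum>j<m. R j * A n j) \<le> C * (if n < m then \<bar>R n\<bar> else 0)"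
proof -
  define R' where "R' i j = (if i = n then R j else 0)" for i j
  have "\<forall>i j. \<bar>R' i j\<bar> \<le> 1"
    using R by (simp add: R'_def)
  then have "(\<Sum>i<Suc n. \<Sum>j<m. R' i j * A i j) \<le> C * (\<Sum>i<min (Suc n) m. \<bar>R' i i\<bar>)"
    by (rule bound)
  moreover have "(\<Sum>i<Suc n. \<Sum>j<m. R' i j * A i j) = (\<Sum>i<Suc n. if i = n then (\<Sum>j<m. R j * A n j) else 0)"
    by (intro sum.cong) (auto simp: R'_def)
  moreover have "(\<Sum>i<min (Suc n) m. \<bar>R' i i\<bar>) = (\<Sum>i<min (Suc n) m. if i = n then \<bar>R n\<bar> else 0)"
    by (intro sum.cong) (auto simp: R'_def)
  ultimately show ?thesis
    by simp
qed

lemma matrix_bound_if_row_bound: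
  fixes A :: "nat \<Rightarrow> nat \<Rightarrow> real"
  assumes bound: "\<And>n m R. \<forall>j. \<bar>R j\<bar> \<le> 1 \<Longrightarrow> (\<Sum>j<m. R j * A n j) \<le> C * (if n < m then \<bar>R n\<bar> else 0)"
    and R: "\<forall>i j. \<bar>R i j\<bar> \<le> 1"
  shows "(\<Sum>i<n. \<Sum>j<m. R i j * A i j) \<le> C * (\<Sum>i<min n m. \<bar>R i i\<bar>)"
proof -
  have "(\<Sum>j<m. R i j * A i j) \<le> (if i \<in> {..<m} then C * \<bar>R i i\<bar> else 0)" for i
    using bound[of "R i" i m] R by (cases "i < m") auto
  then have "(\<Sum>i<n. \<Sum>j<m. R i j * A i j) \<le> (\<Sum>i<n. if i \<in> {..<m} then C * \<bar>R i i\<bar> else 0)"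
    by (intro sum_mono)
  also have "\<dots> = (\<Sum>i\<in>{..<n} \<inter> {..<m}. C * \<bar>R i i\<bar>)"
    by (simp add: sum.inter_restrict)
  also have "{..<n} \<inter> {..<m} = {..<min n m}"
    by auto
  finally show ?thesis
    by (simp add: sum_distrib_left)
qed

lemma matrix_bound_iff_row_bound:
  fixes A :: "nat \<Rightarrow> nat \<Rightarrow> real"
  shows "(\<exists>C > 0. \<forall>n m. \<forall>R :: nat \<Rightarrow> nat \<Rightarrow> real. (\<forall>i j. \<bar>R i j\<bar> \<le> 1) \<longrightarrow>
        (\<Sum>i<n. \<Sum>j<m. R i j * A i j) \<le> C * (\<Sum>i<min n m. \<bar>R i i\<bar>))
    \<longleftrightarrow>
    (\<exists>C > 0. \<forall>n m. \<forall>R :: nat \<Rightarrow> real. (\<forall>j. \<bar>R j\<bar> \<le> 1) \<longrightarrow>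
        (n < m \<longrightarrow> (\<Sum>j<m. R j * A n j) \<le> C * \<bar>R n\<bar>) \<and>
        (m \<le> n \<longrightarrow> (\<Sum>j<m. R j * A n j) \<le> 0))"
proof -
  have row_bound_iff: "((n < m \<longrightarrow> S \<le> C * \<bar>x\<bar>) \<and> (m \<le> n \<longrightarrow> S \<le> 0)) \<longleftrightarrow>
      S \<le> C * (if n < m then \<bar>x\<bar> else 0)" for n m :: nat and S C x :: real
    by auto
  show ?thesis
    unfolding row_bound_iff
    using row_bound_if_matrix_bound matrix_bound_if_row_bound by blast
qed

theorem proposition5p1:
  fixes r p :: real and q :: ereal
    and T :: "(real \<Rightarrow> real) \<Rightarrow> nat \<Rightarrow> real"
  assumes r: "1 < r" "r \<le> 2"
    and p: "r \<le> p"
    and q: "1 < q"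
    and T_into: "\<forall>f \<in> Lp p. T f \<in> lspace q"
    and T_add: "\<forall>f \<in> Lp p. \<forall>g \<in> Lp p. T (\<lambda>x. f x + g x) = (\<lambda>i. T f i + T g i)"
    and T_scale: "\<forall>f \<in> Lp p. \<forall>c. T (\<lambda>x. c * f x) = (\<lambda>i. c * T f i)"
    and T_bounded: "\<exists>K. \<forall>f \<in> Lp p. lnorm q (T f) \<le> K * Lp_norm p f"
    and T_nontrivial: "\<exists>f \<in> Lp p. T f \<noteq> (\<lambda>i. 0)"
  shows
   "((\<exists>g \<in> lspace (s_exp (conj_exp (ereal r)) q).
        \<forall>f \<in> Lp p. T f = (\<lambda>i. g i * fourier f i))
     \<longleftrightarrow>
     ((\<forall>n i. i \<noteq> n \<longrightarrow> T (trig n) i = 0) \<and>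
      (\<lambda>i. T (trig i) i) \<in> lspace (s_exp (conj_exp (ereal r)) q)))
   \<and>
    (((\<forall>n i. i \<noteq> n \<longrightarrow> T (trig n) i = 0) \<and>
      (\<lambda>i. T (trig i) i) \<in> lspace (s_exp (conj_exp (ereal r)) q))
     \<longleftrightarrow>
     (\<exists>C > 0. \<forall>n m. \<forall>R :: nat \<Rightarrow> nat \<Rightarrow> real. (\<forall>i j. \<bar>R i j\<bar> \<le> 1) \<longrightarrow>
        (\<Sum>i<n. \<Sum>j<m. R i j * T (trig j) i)
          \<le> C * (\<Sum>i<min n m. \<bar>R i i\<bar> powr real_of_ereal (conj_exp (s_exp (conj_exp (ereal r)) q)))
                 powr (1 / real_of_ereal (conj_exp (s_exp (conj_exp (ereal r)) q)))))
   \<and>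
    (conj_exp (ereal r) \<le> q \<longrightarrow>
     ((\<exists>C > 0. \<forall>n m. \<forall>R :: nat \<Rightarrow> nat \<Rightarrow> real. (\<forall>i j. \<bar>R i j\<bar> \<le> 1) \<longrightarrow>
        (\<Sum>i<n. \<Sum>j<m. R i j * T (trig j) i)
          \<le> C * (\<Sum>i<min n m. \<bar>R i i\<bar> powr real_of_ereal (conj_exp (s_exp (conj_exp (ereal r)) q)))
                 powr (1 / real_of_ereal (conj_exp (s_exp (conj_exp (ereal r)) q))))
      \<longleftrightarrow>
      (\<exists>C > 0. \<forall>n m. \<forall>R :: nat \<Rightarrow> real. (\<forall>j. \<bar>R j\<bar> \<le> 1) \<longrightarrow>
        (n < m \<longrightarrow> (\<Sum>j<m. R j * T (trig j) n) \<le> C * \<bar>R n\<bar>) \<and>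
        (m \<le> n \<longrightarrow> (\<Sum>j<m. R j * T (trig j) n) \<le> 0))))"
proof -
  interpret Lp_lspace_operator p q T
    using r p q T_into T_add T_scale T_bounded by unfold_locales auto
  define s where "s = s_exp (conj_exp (ereal r)) q"
  define \<sigma> where "\<sigma> = real_of_ereal (conj_exp s)"
  note s_facts = lspace_s_exp_iff_dual_bounded[OF r(1) q, folded s_def \<sigma>_def]
  have diagonal_iff_matrix_bound:
    "((\<forall>n i. i \<noteq> n \<longrightarrow> T (trig n) i = 0) \<and> (\<lambda>i. T (trig i) i) \<in> lspace s) \<longleftrightarrow>
     (\<exists>C > 0. \<forall>n m. \<forall>R :: nat \<Rightarrow> nat \<Rightarrow> real. (\<forall>i j. \<bar>R i j\<bar> \<le> 1) \<longrightarrow>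
        (\<Sum>i<n. \<Sum>j<m. R i j * T (trig j) i) \<le> C * (\<Sum>i<min n m. \<bar>R i i\<bar> powr \<sigma>) powr (1 / \<sigma>))"
    using diagonal_dual_bounded_iff_matrix_bound[of "\<lambda>i j. T (trig j) i" \<sigma>] s_facts(1) by simp
  have "\<sigma> = 1" if "conj_exp (ereal r) \<le> q"
    using s_facts(2) that .
  then show ?thesis
    unfolding s_def[symmetric] \<sigma>_def[symmetric]
    using fourier_multiplier_iff_diagonal diagonal_iff_matrix_bound
      matrix_bound_iff_row_bound[of "\<lambda>i j. T (trig j) i"]
    by auto
qed

end
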